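(* Consider any execution of Phase 1 of COOL. Let $\boldsymbol M_1,\dots,\boldsymbol M_\eta$ be the distinct initial messages held by honest processors, ordered so that $\boldsymbol M_1,\dots,\boldsymbol M_{\eta^{[1]}}$ are exactly those held by at least one honest processor $i$ with $s^{[1]}_i=1$. For $l\in[1:\eta]$ let $\mathcal A_l=\{i \text{ honest}: \boldsymbol w_i=\boldsymbol M_l\}$ and $\mathcal A^{[1]}_l=\{i\in\mathcal A_l: s^{[1]}_i=1\}$, and for $j\ne l$ let $\mathcal A_{l,j}=\{i\in\mathcal A_l: \boldsymbol h_i^{\mathsf T}\boldsymbol M_l=\boldsymbol h_i^{\mathsf T}\boldsymbol M_j\}$ and $\mathcal A^{[1]}_{l,j}=\{i\in\mathcal A^{[1]}_l: \boldsymbol h_i^{\mathsf T}\boldsymbol M_l=\boldsymbol h_i^{\mathsf T}\boldsymbol M_j\}$. If $\eta\ge\eta^{[1]}\ge 2$, then $|\mathcal A_{l,j}|+|\mathcal A_{j,l}|<k$ for all $j\ne l$, $j,l\in[1:\eta]$, and $|\mathcal A^{[1]}_{l,j}|+|\mathcal A^{[1]}_{j,l}|<k$ for all $j\ne l$, $j,l\in[1:\eta^{[1]}]$.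
   Context: Setting. $n$ processors indexed by $[1:n]$, pairwise joined by reliable private synchronous channels; recipients know senders. At most $t$ processors are dishonest (controlled arbitrarily by an adversary; missing values replaced by a fixed default); the others are honest. Processor $i$ holds an $\ell$-bit initial message $\boldsymbol w_i$. $\phi$ is a default value different from every $\ell$-bit message. Logarithms are base 2. Code. $k=\lfloor t/5\rfloor+1$, $c=\lceil \max\{\ell,(t/5+1)\log(n+1)\}/k\rceil$. Messages are zero-padded to $kc$ bits and viewed as vectors in $GF(2^c)^k$. Integers in $[1:n]$ are identified with distinct nonzero elements of $GF(2^c)$ (e.g. via binary representation, possible since $n\le 2^c-1$); $\boldsymbol h_i\in GF(2^c)^k$ has entries $h_{i,j}=\prod_{p\in[1:k],\,p\ne j}\frac{i-p}{j-p}$, $j\in[1:k]$, computed in $GF(2^c)$. Phase 1 of COOL (honest processor $i$): set $y^{(i)}_j:=\boldsymbol h_j^{\mathsf T}\boldsymbol w_i$ for $j\in[1:n]$ and $u_i(i):=1$; send $(y^{(i)}_j,y^{(i)}_i)$ to each $j\ne i$; for $j\ne i$ set $u_i(j):=1$ if the pair received from $j$ equals $(y^{(i)}_i,y^{(i)}_j)$ and $u_i(j):=0$ otherwise; the Phase-1 success indicator is $s^{[1]}_i:=1$ if $\sum_{j=1}^n u_i(j)\ge n-t$ and $s^{[1]}_i:=0$ otherwise. *)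

theory Defs
  imports Complex_Main
begin

definition cool_k :: "nat \<Rightarrow> nat" where
  "cool_k t = t div 5 + 1"

definition cool_c :: "nat \<Rightarrow> nat \<Rightarrow> nat \<Rightarrow> nat" where
  "cool_c n t ell = nat \<lceil> max (real ell) ((real t / 5 + 1) * log 2 (real n + 1)) / real (cool_k t) \<rceil>"

text \<open>Encoding of a bit string (message) as a vector in GF(2^c)^k, indexed by [1:k]:
  zero-pad to k*c bits, cut into k consecutive blocks of c bits, and map each block to a
  field element via the fixed bijection beta between c-bit strings and GF(2^c).\<close>

definition encode :: "(bool list \<Rightarrow> 'f) \<Rightarrow> nat \<Rightarrow> nat \<Rightarrow> bool list \<Rightarrow> nat \<Rightarrow> 'f" where
  "encode \<beta> c k w = (\<lambda>j. \<beta> (take c (drop ((j - 1) * c) (w @ replicate (k * c - length w) False))))"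

text \<open>Lagrange coefficient h_{i,j}; emb identifies integers with nonzero field elements.\<close>

definition hcoef :: "(nat \<Rightarrow> 'f::field) \<Rightarrow> nat \<Rightarrow> nat \<Rightarrow> nat \<Rightarrow> 'f" where
  "hcoef emb k i j = (\<Prod>p\<in>{1..k} - {j}. (emb i - emb p) / (emb j - emb p))"

definition hdot :: "(nat \<Rightarrow> 'f::field) \<Rightarrow> nat \<Rightarrow> nat \<Rightarrow> (nat \<Rightarrow> 'f) \<Rightarrow> 'f" where
  "hdot emb k i v = (\<Sum>j\<in>{1..k}. hcoef emb k i j * v j)"

text \<open>Phase 1 of COOL. w i is the initial message of processor i; recv i j is the pair
  processor i received from processor j.\<close>

definition y1 :: "(nat \<Rightarrow> 'f::field) \<Rightarrow> (bool list \<Rightarrow> 'f) \<Rightarrow> nat \<Rightarrow> nat \<Rightarrow> (nat \<Rightarrow> bool list)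
     \<Rightarrow> nat \<Rightarrow> nat \<Rightarrow> 'f" where
  "y1 emb \<beta> c k w i j = hdot emb k j (encode \<beta> c k (w i))"

definition u1 :: "(nat \<Rightarrow> 'f::field) \<Rightarrow> (bool list \<Rightarrow> 'f) \<Rightarrow> nat \<Rightarrow> nat \<Rightarrow> (nat \<Rightarrow> bool list)
     \<Rightarrow> (nat \<Rightarrow> nat \<Rightarrow> 'f \<times> 'f) \<Rightarrow> nat \<Rightarrow> nat \<Rightarrow> bool" where
  "u1 emb \<beta> c k w recv i j =
     (j = i \<or> recv i j = (y1 emb \<beta> c k w i i, y1 emb \<beta> c k w i j))"

definition s1 :: "nat \<Rightarrow> nat \<Rightarrow> (nat \<Rightarrow> 'f::field) \<Rightarrow> (bool list \<Rightarrow> 'f) \<Rightarrow> nat \<Rightarrow> nat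
     \<Rightarrow> (nat \<Rightarrow> bool list) \<Rightarrow> (nat \<Rightarrow> nat \<Rightarrow> 'f \<times> 'f) \<Rightarrow> nat \<Rightarrow> bool" where
  "s1 n t emb \<beta> c k w recv i =
     (card {j \<in> {1..n}. u1 emb \<beta> c k w recv i j} \<ge> n - t)"

end

theory Submission
  imports Defs "HOL-Computational_Algebra.Polynomial"
begin

text \<open>The map v \<mapsto> (h_i^T v)_i is Reed-Solomon encoding: h_i^T v is the value at emb i of the
  polynomial of degree < k interpolating v at the nodes emb 1, ..., emb k. Distinct messages
  have distinct encodings, so the interpolating polynomial of their difference is nonzero and
  has fewer than k roots; hence two codewords agree on fewer than k processors. The sets
  A_{l,j} and A_{j,l} are disjoint sets of such processors.\<close>

definition lagrange_basis :: "(nat \<Rightarrow> 'f::field) \<Rightarrow> nat \<Rightarrow> nat \<Rightarrow> 'f poly" where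
  "lagrange_basis emb k j =
     (\<Prod>p\<in>{1..k} - {j}. [: - emb p / (emb j - emb p), 1 / (emb j - emb p) :])"

definition interp_poly :: "(nat \<Rightarrow> 'f::field) \<Rightarrow> nat \<Rightarrow> (nat \<Rightarrow> 'f) \<Rightarrow> 'f poly" where
  "interp_poly emb k v = (\<Sum>j\<in>{1..k}. smult (v j) (lagrange_basis emb k j))"

lemma poly_lagrange_basis: "poly (lagrange_basis emb k j) (emb i) = hcoef emb k i j"
  unfolding hcoef_def lagrange_basis_def poly_prod
  by (rule prod.cong) (auto simp: diff_divide_distrib)

lemma degree_lagrange_basis_le:
  assumes "j \<in> {1..k}"
  shows "degree (lagrange_basis emb k j) \<le> k - 1"
proof -
  have "degree (lagrange_basis emb k j) \<le> (\<Sum>p\<in>{1..k} - {j}. 1)"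
    unfolding lagrange_basis_def
    by (rule order.trans[OF degree_prod_sum_le sum_mono]) auto
  also have "\<dots> = k - 1"
    using assms by (simp add: card_Diff_singleton)
  finally show ?thesis .
qed

lemma hcoef_node:
  assumes "inj_on emb {1..k}" and "m \<in> {1..k}" and "j \<in> {1..k}"
  shows "hcoef emb k m j = (if j = m then 1 else 0)"
proof (cases "j = m")
  case True
  have "emb j \<noteq> emb p" if "p \<in> {1..k} - {j}" for p
    using assms that True by (auto dest: inj_onD)
  then show ?thesis
    unfolding hcoef_def using True by (auto intro: prod.neutral)
next
  case False
  then show ?thesis
    unfolding hcoef_def using assms(2) by (auto intro!: prod_zero bexI[of _ m])
qed

lemma hdot_node:
  assumes "inj_on emb {1..k}" and "m \<in> {1..k}"
  shows "hdot emb k m v = v m"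
proof -
  have "hdot emb k m v = (\<Sum>j\<in>{1..k}. if j = m then v j else 0)"
    unfolding hdot_def by (rule sum.cong) (auto simp: hcoef_node[OF assms])
  also have "\<dots> = v m"
    using assms(2) by simp
  finally show ?thesis .
qed

lemma poly_interp_poly: "poly (interp_poly emb k v) (emb i) = hdot emb k i v"
  unfolding interp_poly_def hdot_def poly_sum
  by (simp add: poly_lagrange_basis mult.commute)

lemma degree_interp_poly_le: "degree (interp_poly emb k v) \<le> k - 1"
  unfolding interp_poly_def
  by (intro degree_sum_le order.trans[OF degree_smult_le degree_lagrange_basis_le]) auto

lemma hdot_diff: "hdot emb k i a - hdot emb k i b = hdot emb k i (\<lambda>j. a j - b j)"
  unfolding hdot_def by (simp add: sum_subtractf[symmetric] algebra_simps)

lemma card_hdot_agree_less: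
  fixes emb :: "nat \<Rightarrow> 'f::field"
  assumes inj: "inj_on emb (S \<union> {1..k})"
    and m: "m \<in> {1..k}" and differ: "a m \<noteq> b m"
  shows "card {i \<in> S. hdot emb k i a = hdot emb k i b} < k"
proof -
  define Q where "Q = interp_poly emb k (\<lambda>j. a j - b j)"
  have poly_Q: "poly Q (emb i) = hdot emb k i a - hdot emb k i b" for i
    unfolding Q_def poly_interp_poly hdot_diff ..
  have "poly Q (emb m) \<noteq> 0"
    using poly_Q hdot_node[OF inj_on_subset[OF inj] m] differ by auto
  then have "Q \<noteq> 0" by auto
  have "card {i \<in> S. hdot emb k i a = hdot emb k i b}
      = card (emb ` {i \<in> S. hdot emb k i a = hdot emb k i b})"
    by (rule card_image[symmetric]) (rule inj_on_subset[OF inj], auto)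
  also have "\<dots> \<le> card {x. poly Q x = 0}"
    by (rule card_mono[OF poly_roots_finite[OF \<open>Q \<noteq> 0\<close>]]) (auto simp: poly_Q)
  also have "\<dots> \<le> degree Q"
    by (rule card_poly_roots_bound[OF \<open>Q \<noteq> 0\<close>])
  also have "\<dots> < k"
    using degree_interp_poly_le[of emb k "\<lambda>j. a j - b j"] m unfolding Q_def by auto
  finally show ?thesis .
qed

lemma list_eq_if_blocks_eq:
  assumes "length xs = k * c" and "length ys = k * c"
    and "\<forall>m<k. take c (drop (m * c) xs) = take c (drop (m * c) ys)"
  shows "xs = ys"
  using assms
proof (induction k arbitrary: xs ys)
  case 0
  then show ?case by simp
next
  case (Suc k)
  have "take c xs = take c ys"
    using Suc.prems(3) by (metis drop_0 mult_0 zero_less_Suc)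
  moreover have "drop c xs = drop c ys"
  proof (rule Suc.IH)
    show "length (drop c xs) = k * c" "length (drop c ys) = k * c"
      using Suc.prems(1,2) by simp_all
    show "\<forall>m<k. take c (drop (m * c) (drop c xs)) = take c (drop (m * c) (drop c ys))"
      using Suc.prems(3) by (auto simp: add.commute[of _ c] dest: spec[of _ "Suc _"])
  qed
  ultimately show ?case
    by (metis append_take_drop_id)
qed

lemma encode_inj:
  assumes "length a = length b" and "length a \<le> k * c"
    and "inj_on \<beta> {xs. length xs = c}"
    and "\<forall>j\<in>{1..k}. encode \<beta> c k a j = encode \<beta> c k b j"
  shows "a = b"
proof -
  define pad where "pad xs = xs @ replicate (k * c - length xs) False" for xs :: "bool list"
  have "pad a = pad b"
  proof (rule list_eq_if_blocks_eq)
    show "length (pad a) = k * c" "length (pad b) = k * c"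
      using assms(1,2) by (auto simp: pad_def)
    show "\<forall>m<k. take c (drop (m * c) (pad a)) = take c (drop (m * c) (pad b))"
    proof (intro allI impI)
      fix m assume "m < k"
      then have "m * c + c \<le> k * c"
        by (metis add.commute less_eq_Suc_le mult_Suc mult_le_mono1)
      then have "length (take c (drop (m * c) (pad x))) = c" if "length x = length a" for x
        using assms(2) that by (simp add: pad_def)
      moreover have "\<beta> (take c (drop (m * c) (pad a))) = \<beta> (take c (drop (m * c) (pad b)))"
        using assms(4) \<open>m < k\<close> by (auto simp: encode_def pad_def dest: bspec[of _ _ "Suc m"])
      ultimately show "take c (drop (m * c) (pad a)) = take c (drop (m * c) (pad b))"
        using assms(1,3) by (auto dest: inj_onD)
    qed
  qed
  then show ?thesis
    using assms(1) unfolding pad_def by simp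
qed

lemma card_agree_pair_less:
  fixes emb :: "nat \<Rightarrow> 'f::field"
  assumes "finite G" and inj: "inj_on emb (G \<union> {1..k})"
    and "a \<noteq> b" and "length a = length b" and "length a \<le> k * c"
    and "inj_on \<beta> {xs. length xs = c}"
  shows "card {i \<in> G. w i = a \<and> hdot emb k i (encode \<beta> c k a) = hdot emb k i (encode \<beta> c k b)}
       + card {i \<in> G. w i = b \<and> hdot emb k i (encode \<beta> c k b) = hdot emb k i (encode \<beta> c k a)}
       < k" (is "card ?A + card ?B < k")
proof -
  obtain m where m: "m \<in> {1..k}" and differ: "encode \<beta> c k a m \<noteq> encode \<beta> c k b m"
    using encode_inj assms(3-6) by blast
  have "card ?A + card ?B = card (?A \<union> ?B)"
    using \<open>finite G\<close> \<open>a \<noteq> b\<close> by (intro card_Un_disjoint[symmetric]) auto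
  also have "\<dots> \<le> card {i \<in> G. hdot emb k i (encode \<beta> c k a) = hdot emb k i (encode \<beta> c k b)}"
    using \<open>finite G\<close> by (intro card_mono) auto
  also have "\<dots> < k"
    by (rule card_hdot_agree_less[OF inj m, where a = "encode \<beta> c k a" and b = "encode \<beta> c k b"])
      (rule differ)
  finally show ?thesis .
qed

lemma ell_le_cool_k_mult_cool_c: "ell \<le> cool_k t * cool_c n t ell"
proof -
  have k_pos: "real (cool_k t) > 0"
    by (simp add: cool_k_def)
  have "real ell / real (cool_k t)
      \<le> max (real ell) ((real t / 5 + 1) * log 2 (real n + 1)) / real (cool_k t)"
    using k_pos by (simp add: divide_right_mono)
  also have "\<dots> \<le> real (cool_c n t ell)"
    unfolding cool_c_def by linarith
  finally have "real ell \<le> real (cool_k t) * real (cool_c n t ell)"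
    using k_pos by (simp add: field_simps)
  then show ?thesis
    by (metis of_nat_le_iff of_nat_mult)
qed

theorem lemma7:
  fixes n t ell :: nat
    and emb :: "nat \<Rightarrow> 'f::{field,finite}"
    and \<beta> :: "bool list \<Rightarrow> 'f"
    and H :: "nat set"
    and w :: "nat \<Rightarrow> bool list"
    and recv :: "nat \<Rightarrow> nat \<Rightarrow> 'f \<times> 'f"
    and M :: "nat \<Rightarrow> bool list"
    and \<eta> \<eta>1 :: nat
  assumes field_card: "card (UNIV :: 'f set) = 2 ^ cool_c n t ell"
    and beta_bij: "bij_betw \<beta> {xs. length xs = cool_c n t ell} UNIV"
    and emb_inj: "inj_on emb {1..max n (cool_k t)}"
    and emb_nz: "\<forall>i\<in>{1..max n (cool_k t)}. emb i \<noteq> 0"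
    and H_sub: "H \<subseteq> {1..n}"
    and few_dishonest: "card ({1..n} - H) \<le> t"
    and msg_len: "\<forall>i\<in>H. length (w i) = ell"
    and honest_send: "\<forall>i\<in>H. \<forall>j\<in>H. j \<noteq> i \<longrightarrow>
        recv i j = (y1 emb \<beta> (cool_c n t ell) (cool_k t) w j i,
                    y1 emb \<beta> (cool_c n t ell) (cool_k t) w j j)"
    and M_inj: "inj_on M {1..\<eta>}"
    and M_all: "M ` {1..\<eta>} = w ` H"
    and M_succ: "M ` {1..\<eta>1} =
        w ` {i \<in> H. s1 n t emb \<beta> (cool_c n t ell) (cool_k t) w recv i}"
    and eta_ge: "\<eta> \<ge> \<eta>1" "\<eta>1 \<ge> 2"
  shows
   "(let k = cool_k t; c = cool_c n t ell;
         A = (\<lambda>l. {i \<in> H. w i = M l});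
         A1 = (\<lambda>l. {i \<in> A l. s1 n t emb \<beta> c k w recv i});
         Alj = (\<lambda>l j. {i \<in> A l. hdot emb k i (encode \<beta> c k (M l))
                                   = hdot emb k i (encode \<beta> c k (M j))});
         A1lj = (\<lambda>l j. {i \<in> A1 l. hdot emb k i (encode \<beta> c k (M l))
                                   = hdot emb k i (encode \<beta> c k (M j))})
     in (\<forall>l\<in>{1..\<eta>}. \<forall>j\<in>{1..\<eta>}. j \<noteq> l \<longrightarrow> card (Alj l j) + card (Alj j l) < k)
      \<and> (\<forall>l\<in>{1..\<eta>1}. \<forall>j\<in>{1..\<eta>1}. j \<noteq> l \<longrightarrow> card (A1lj l j) + card (A1lj j l) < k))"
proof -
  define k where "k = cool_k t"
  define c where "c = cool_c n t ell"
  have pair_less: "card {i \<in> G. w i = M l \<and> hdot emb k i (encode \<beta> c k (M l)) = hdot emb k i (encode \<beta> c k (M j))}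
      + card {i \<in> G. w i = M j \<and> hdot emb k i (encode \<beta> c k (M j)) = hdot emb k i (encode \<beta> c k (M l))}
      < k"
    if "G \<subseteq> H" "l \<in> {1..\<eta>}" "j \<in> {1..\<eta>}" "j \<noteq> l" for G l j
  proof (rule card_agree_pair_less)
    show "finite G"
      using that(1) H_sub by (meson finite_atLeastAtMost finite_subset subset_trans)
    show "inj_on emb (G \<union> {1..k})"
      by (rule inj_on_subset[OF emb_inj]) (use that(1) H_sub in \<open>force simp: k_def\<close>)
    show "M l \<noteq> M j"
      using M_inj that(2-4) by (auto dest: inj_onD)
    have "length (M x) = ell" if "x \<in> {1..\<eta>}" for x
      using M_all msg_len that by force
    then show "length (M l) = length (M j)" "length (M l) \<le> k * c"
      using that(2,3) ell_le_cool_k_mult_cool_c by (auto simp: k_def c_def)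
    show "inj_on \<beta> {xs. length xs = c}"
      using beta_bij by (simp add: bij_betw_def c_def)
  qed
  show ?thesis
    unfolding Let_def k_def[symmetric] c_def[symmetric]
    using pair_less[of H] pair_less[of "{i \<in> H. s1 n t emb \<beta> c k w recv i}"] eta_ge(1)
    by (simp add: conj_ac)
qed

end
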